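(* Let $\alpha:I\to\mathbb{E}^3$ be a unit speed Frenet curve with arclength parameter $s$, Frenet frame $\{T,N,B\}$, curvature $\kappa>0$ and torsion $\tau$. Let $\beta(s)=\int\big(x_1(s)T(s)+x_2(s)N(s)\big)\,ds$ be an osculating mate of $\alpha$, i.e. $x_1,x_2$ are smooth functions with $x_1^2+x_2^2=1$ and $\beta''(s)\perp \mathrm{span}\{T(s),N(s)\}$ for all $s$, and assume $\beta$ is a Frenet curve. Then $x_1(s)=\sin\big(\int\kappa(s)ds\big)$, $x_2(s)=\cos\big(\int\kappa(s)ds\big)$ for an antiderivative $\int\kappa(s)ds$ of $\kappa$, and the Frenet apparatus $\{\bar T,\bar N,\bar B,\bar\kappa,\bar\tau\}$ of $\beta$ is $$\bar T=\sin\Big(\int\kappa ds\Big)T+\cos\Big(\int\kappa ds\Big)N,\quad \bar N=B,\quad \bar B=\cos\Big(\int\kappa ds\Big)T-\sin\Big(\int\kappa ds\Big)N,$$ $$\bar\kappa=\varepsilon_1\tau\cos\Big(\int\kappa ds\Big),\qquad \bar\tau=\tau\sin\Big(\int\kappa ds\Big),$$ where $\varepsilon_1=\pm1$ is chosen such that $\bar\kappa>0$.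
   Context: A unit speed curve $\alpha$ in Euclidean 3-space $\mathbb{E}^3$ is a Frenet curve if its curvature $\kappa=\|\alpha''\|$ is nowhere zero; its Frenet frame satisfies $T=\alpha'$, $T'=\kappa N$, $N'=-\kappa T+\tau B$, $B'=-\tau N$, $B=T\times N$. Since $\|\beta'\|=1$, $\beta$ is unit speed with parameter $s$, and its Frenet apparatus is defined in the same way (with derivatives with respect to $s$).
   Formalization: $\bar N$ is $\varepsilon_1 B$ and $\bar B$ is $\varepsilon_1(\cos(\int\kappa ds)T-\sin(\int\kappa ds)N)$, with the same sign $\varepsilon_1$ as in $\bar\kappa$, instead of $\bar N=B$ and $\bar B$ without the factor $\varepsilon_1$. The statement above fails without it. *)

theory Defs
  imports "HOL-Analysis.Analysis"
begin

text \<open>Curves in Euclidean 3-space are functions real => real^3; derivatives are taken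
  at interior points of the open parameter interval I.\<close>

definition vel :: "(real \<Rightarrow> real^3) \<Rightarrow> real \<Rightarrow> real^3" where
  "vel \<alpha> s = vector_derivative \<alpha> (at s)"

definition acc :: "(real \<Rightarrow> real^3) \<Rightarrow> real \<Rightarrow> real^3" where
  "acc \<alpha> s = vector_derivative (vel \<alpha>) (at s)"

definition unit_speed_on :: "real set \<Rightarrow> (real \<Rightarrow> real^3) \<Rightarrow> bool" where
  "unit_speed_on I \<alpha> \<longleftrightarrow> (\<forall>s\<in>I. \<alpha> differentiable (at s) \<and> norm (vel \<alpha> s) = 1)"

definition frenet_curve_on :: "real set \<Rightarrow> (real \<Rightarrow> real^3) \<Rightarrow> bool" where
  "frenet_curve_on I \<alpha> \<longleftrightarrow> unit_speed_on I \<alpha> \<and>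
     (\<forall>s\<in>I. vel \<alpha> differentiable (at s) \<and> norm (acc \<alpha> s) \<noteq> 0)"

definition frenet_apparatus ::
  "real set \<Rightarrow> (real \<Rightarrow> real^3) \<Rightarrow> (real \<Rightarrow> real^3) \<Rightarrow> (real \<Rightarrow> real^3) \<Rightarrow> (real \<Rightarrow> real^3)
   \<Rightarrow> (real \<Rightarrow> real) \<Rightarrow> (real \<Rightarrow> real) \<Rightarrow> bool" where
  "frenet_apparatus I \<alpha> T N B \<kappa> \<tau> \<longleftrightarrow> frenet_curve_on I \<alpha> \<and>
     (\<forall>s\<in>I. T s = vel \<alpha> s \<and> \<kappa> s = norm (acc \<alpha> s) \<and> N s = (1 / \<kappa> s) *\<^sub>R acc \<alpha> s \<and>
        B s = cross3 (T s) (N s) \<and>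
        (N has_vector_derivative (- \<kappa> s *\<^sub>R T s + \<tau> s *\<^sub>R B s)) (at s) \<and>
        (B has_vector_derivative (- \<tau> s *\<^sub>R N s)) (at s))"

end

theory Submission
  imports Defs
begin

text \<open>Differentiating \<open>\<beta>' = x1 T + x2 N\<close> with the Frenet equations of \<open>\<alpha>\<close> gives
  \<open>\<beta>'' = (x1' - \<kappa> x2) T + (x2' + \<kappa> x1) N + \<tau> x2 B\<close>, so the osculating condition is the
  linear system \<open>x1' = \<kappa> x2\<close>, \<open>x2' = - \<kappa> x1\<close>. On an interval the unit vector
  \<open>(x2, x1)\<close> has a continuous angle \<open>\<theta>\<close>, and the system forces \<open>\<theta>' = \<kappa>\<close>. Then
  \<open>\<beta>'' = \<tau> cos \<theta> B\<close>, which determines \<open>\<kappa>b = \<bar>\<tau> cos \<theta>\<bar>\<close>, \<open>Nb = \<plusminus>B\<close> and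
  \<open>Bb = Tb \<times> Nb\<close>; the torsion is read off from \<open>\<tau>b = Nb' \<bullet> Bb\<close>.\<close>

lemma has_vector_derivative_inner:
  fixes f g :: "real \<Rightarrow> 'a::real_inner"
  assumes "(f has_vector_derivative f') (at s)" "(g has_vector_derivative g') (at s)"
  shows "((\<lambda>t. f t \<bullet> g t) has_real_derivative (f' \<bullet> g s + f s \<bullet> g')) (at s)"
proof -
  have "((\<lambda>t. f t \<bullet> g t) has_derivative (\<lambda>h. f s \<bullet> (h *\<^sub>R g') + (h *\<^sub>R f') \<bullet> g s)) (at s)"
    using assms unfolding has_vector_derivative_def by (intro has_derivative_inner)
  then show ?thesis unfolding has_field_derivative_def
    by (rule has_derivative_eq_rhs) (auto simp: algebra_simps fun_eq_iff)
qed

lemma inner_constant_on_derivative: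
  fixes f g :: "real \<Rightarrow> 'a::real_inner"
  assumes "open S" "s \<in> S" "\<And>t. t \<in> S \<Longrightarrow> f t \<bullet> g t = c"
    and "(f has_vector_derivative f') (at s)" "(g has_vector_derivative g') (at s)"
  shows "f' \<bullet> g s + f s \<bullet> g' = 0"
proof -
  have "((\<lambda>t. f t \<bullet> g t) has_real_derivative 0) (at s)"
    by (rule has_field_derivative_transform_within_open[of "\<lambda>_. c" _ _ S]) (use assms in auto)
  then show ?thesis
    using DERIV_unique has_vector_derivative_inner[OF assms(4,5)] by blast
qed

lemma cross3_orthonormal:
  fixes u v :: "real^3"
  assumes "u \<bullet> u = 1" "v \<bullet> v = 1" "u \<bullet> v = 0"
  shows "cross3 u v \<bullet> cross3 u v = 1" "cross3 u (cross3 u v) = - v" "cross3 v (cross3 u v) = u"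
proof -
  show "cross3 u v \<bullet> cross3 u v = 1"
    using norm_cross_dot[of u v] assms by (simp add: power_mult_distrib power2_norm_eq_inner)
  show "cross3 u (cross3 u v) = - v" "cross3 v (cross3 u v) = u"
    using Cross3.Lagrange[of u u v] Cross3.Lagrange[of v u v] assms by (simp_all add: inner_commute)
qed

lemma frenet_apparatusD:
  assumes "frenet_apparatus I \<alpha> T N B \<kappa> \<tau>" "s \<in> I"
  shows "T s = vel \<alpha> s" "norm (T s) = 1" "vel \<alpha> differentiable (at s)"
    "\<kappa> s = norm (acc \<alpha> s)" "\<kappa> s > 0" "N s = (1 / \<kappa> s) *\<^sub>R acc \<alpha> s"
    "B s = cross3 (T s) (N s)"
    "(N has_vector_derivative (- \<kappa> s *\<^sub>R T s + \<tau> s *\<^sub>R B s)) (at s)"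
  using assms unfolding frenet_apparatus_def frenet_curve_on_def unit_speed_on_def by auto

lemma frenet_acc_eq:
  assumes "frenet_apparatus I \<alpha> T N B \<kappa> \<tau>" "s \<in> I"
  shows "acc \<alpha> s = \<kappa> s *\<^sub>R N s"
  using frenet_apparatusD[OF assms] by simp

lemma frenet_tangent_derivative:
  assumes "frenet_apparatus I \<alpha> T N B \<kappa> \<tau>" "open I" "s \<in> I"
  shows "(T has_vector_derivative \<kappa> s *\<^sub>R N s) (at s)"
proof -
  have "(vel \<alpha> has_vector_derivative acc \<alpha> s) (at s)"
    using frenet_apparatusD[OF assms(1,3)] unfolding acc_def by (simp add: vector_derivative_works)
  then have "(T has_vector_derivative acc \<alpha> s) (at s)"
    by (rule has_vector_derivative_transform_within_open[OF _ assms(2,3)])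
      (use frenet_apparatusD(1)[OF assms(1)] in auto)
  then show ?thesis using frenet_acc_eq[OF assms(1,3)] by simp
qed

lemma frenet_frame_orthonormal:
  assumes "frenet_apparatus I \<alpha> T N B \<kappa> \<tau>" "open I" "s \<in> I"
  shows "T s \<bullet> T s = 1" "N s \<bullet> N s = 1" "B s \<bullet> B s = 1"
    "T s \<bullet> N s = 0" "T s \<bullet> B s = 0" "N s \<bullet> B s = 0"
proof -
  note D = frenet_apparatusD[OF assms(1)]
  show TT: "T s \<bullet> T s = 1" using D(2)[OF assms(3)] by (simp add: norm_eq_1)
  show NN: "N s \<bullet> N s = 1"
    using D(4-6)[OF assms(3)] by (simp add: dot_square_norm)
  have "\<kappa> s *\<^sub>R N s \<bullet> T s + T s \<bullet> \<kappa> s *\<^sub>R N s = 0"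
    using frenet_tangent_derivative[OF assms] D(2)
    by (intro inner_constant_on_derivative[OF assms(2,3), of T T 1]) (auto simp: norm_eq_1)
  then show TN: "T s \<bullet> N s = 0" using D(5)[OF assms(3)] by (simp add: inner_commute)
  show "B s \<bullet> B s = 1" using cross3_orthonormal(1)[OF TT NN TN] D(7)[OF assms(3)] by simp
  show "T s \<bullet> B s = 0" "N s \<bullet> B s = 0"
    using D(7)[OF assms(3)] dot_cross_self by (auto simp: inner_commute)
qed

lemma frenet_frame_cross:
  assumes "frenet_apparatus I \<alpha> T N B \<kappa> \<tau>" "open I" "s \<in> I"
  shows "cross3 (T s) (B s) = - N s" "cross3 (N s) (B s) = T s"
  using cross3_orthonormal(2,3)[OF frenet_frame_orthonormal(1,2,4)[OF assms]]
    frenet_apparatusD(7)[OF assms(1,3)] by simp_all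

lemma continuous_angle_lifting:
  fixes x y :: "real \<Rightarrow> real"
  assumes "is_interval I" "continuous_on I x" "continuous_on I y"
    and "\<And>t. t \<in> I \<Longrightarrow> (x t)\<^sup>2 + (y t)\<^sup>2 = 1"
  shows "\<exists>\<theta>. continuous_on I \<theta> \<and> (\<forall>t\<in>I. x t = cos (\<theta> t) \<and> y t = sin (\<theta> t))"
proof -
  define z where "z t = Complex (x t) (y t)" for t
  have "continuous_on I z"
    unfolding z_def Complex_eq by (intro continuous_intros assms)
  moreover have "z \<in> I \<rightarrow> sphere 0 1"
    using assms(4) by (auto simp: z_def cmod_def)
  moreover have "Borsukian I"
    using assms(1) by (simp add: convex_imp_Borsukian is_interval_convex)
  ultimately obtain \<theta> where cont: "continuous_on I (complex_of_real \<circ> \<theta>)"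
    and z: "\<And>t. t \<in> I \<Longrightarrow> z t = exp (\<i> * complex_of_real (\<theta> t))"
    unfolding Borsukian_continuous_logarithm_circle_real by metis
  have "continuous_on I (Re \<circ> (complex_of_real \<circ> \<theta>))"
    by (intro continuous_on_compose cont continuous_intros)
  moreover have "x t = cos (\<theta> t) \<and> y t = sin (\<theta> t)" if "t \<in> I" for t
    using arg_cong[OF z[OF that], of Re] arg_cong[OF z[OF that], of Im]
    by (simp add: z_def Re_exp Im_exp)
  ultimately show ?thesis by (auto simp: o_def)
qed

lemma angle_has_real_derivative:
  fixes \<theta> :: "real \<Rightarrow> real"
  assumes "isCont \<theta> s"
    and sin: "((\<lambda>t. sin (\<theta> t)) has_real_derivative a) (at s)"
    and cos: "((\<lambda>t. cos (\<theta> t)) has_real_derivative b) (at s)"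
  shows "(\<theta> has_real_derivative (a * cos (\<theta> s) - b * sin (\<theta> s))) (at s)"
proof -
  \<comment> \<open>Near \<open>s\<close>, \<open>\<theta> = \<theta> s + arcsin (sin (\<theta> - \<theta> s))\<close> by continuity, and the
    right-hand side only involves \<open>sin \<theta>\<close> and \<open>cos \<theta>\<close>.\<close>
  define h where "h t = sin (\<theta> t) * cos (\<theta> s) - cos (\<theta> t) * sin (\<theta> s)" for t
  have h: "h t = sin (\<theta> t - \<theta> s)" for t
    by (simp add: h_def sin_diff)
  have "(h has_real_derivative (a * cos (\<theta> s) - b * sin (\<theta> s))) (at s)"
    unfolding h_def by (intro DERIV_diff DERIV_cmult_right sin cos)
  from DERIV_chain2[OF DERIV_arcsin this]
  have "((\<lambda>t. arcsin (h t)) has_real_derivative (a * cos (\<theta> s) - b * sin (\<theta> s))) (at s)"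
    by (simp add: h)
  then have lift: "((\<lambda>t. \<theta> s + arcsin (h t)) has_real_derivative (a * cos (\<theta> s) - b * sin (\<theta> s))) (at s)"
    using DERIV_add[OF DERIV_const] by fastforce
  have near: "\<forall>\<^sub>F t in nhds s. \<theta> s + arcsin (h t) = \<theta> t"
  proof -
    have "\<forall>\<^sub>F t in nhds s. dist (\<theta> t) (\<theta> s) < pi / 2"
      using assms(1) by (intro tendstoD) (simp_all add: isCont_def tendsto_at_iff_tendsto_nhds)
    then show ?thesis
    proof eventually_elim
      case (elim t)
      then have "- (pi / 2) \<le> \<theta> t - \<theta> s" "\<theta> t - \<theta> s \<le> pi / 2"
        unfolding dist_real_def by linarith+
      then show ?case by (simp add: h arcsin_sin)
    qed
  qed
  show ?thesis
    using lift DERIV_cong_ev[OF refl near refl] by blast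
qed

locale osculating_mate =
  fixes I :: "real set" and \<alpha> \<beta> T N B :: "real \<Rightarrow> real^3" and \<kappa> \<tau> x1 x2 :: "real \<Rightarrow> real"
  assumes interval: "is_interval I" and open_dom: "open I"
    and alpha: "frenet_apparatus I \<alpha> T N B \<kappa> \<tau>"
    and beta_vel: "\<forall>s\<in>I. (\<beta> has_vector_derivative (x1 s *\<^sub>R T s + x2 s *\<^sub>R N s)) (at s)"
    and x_smooth: "\<forall>s\<in>I. x1 differentiable (at s) \<and> x2 differentiable (at s)"
    and unit: "\<forall>s\<in>I. (x1 s)\<^sup>2 + (x2 s)\<^sup>2 = 1"
    and osc: "\<forall>s\<in>I. \<forall>w\<in>span {T s, N s}. orthogonal (acc \<beta> s) w"
begin

lemmas frame_orthonormal = frenet_frame_orthonormal[OF alpha open_dom]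
lemmas frame_cross = frenet_frame_cross[OF alpha open_dom]

lemma vel_beta: "s \<in> I \<Longrightarrow> vel \<beta> s = x1 s *\<^sub>R T s + x2 s *\<^sub>R N s"
  using beta_vel vector_derivative_at unfolding vel_def by blast

lemma acc_beta_expansion:
  assumes s: "s \<in> I"
    and x1': "(x1 has_real_derivative x1') (at s)" and x2': "(x2 has_real_derivative x2') (at s)"
  shows "acc \<beta> s = (x1' - \<kappa> s * x2 s) *\<^sub>R T s + (x2' + \<kappa> s * x1 s) *\<^sub>R N s + (\<tau> s * x2 s) *\<^sub>R B s"
proof -
  have "((\<lambda>t. x1 t *\<^sub>R T t + x2 t *\<^sub>R N t) has_vector_derivative
      x1 s *\<^sub>R (\<kappa> s *\<^sub>R N s) + x1' *\<^sub>R T s + (x2 s *\<^sub>R (- \<kappa> s *\<^sub>R T s + \<tau> s *\<^sub>R B s) + x2' *\<^sub>R N s)) (at s)"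
    by (intro has_vector_derivative_add has_vector_derivative_scaleR x1' x2'
        frenet_tangent_derivative[OF alpha open_dom s] frenet_apparatusD(8)[OF alpha s])
  then have "(vel \<beta> has_vector_derivative
      x1 s *\<^sub>R (\<kappa> s *\<^sub>R N s) + x1' *\<^sub>R T s + (x2 s *\<^sub>R (- \<kappa> s *\<^sub>R T s + \<tau> s *\<^sub>R B s) + x2' *\<^sub>R N s)) (at s)"
    by (rule has_vector_derivative_transform_within_open[OF _ open_dom s]) (simp add: vel_beta)
  then show ?thesis
    unfolding acc_def by (subst vector_derivative_at) (auto simp: algebra_simps)
qed

lemma coefficient_derivatives:
  assumes s: "s \<in> I"
  shows "(x1 has_real_derivative \<kappa> s * x2 s) (at s)" "(x2 has_real_derivative - \<kappa> s * x1 s) (at s)"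
proof -
  have x1': "(x1 has_real_derivative deriv x1 s) (at s)" and x2': "(x2 has_real_derivative deriv x2 s) (at s)"
    using x_smooth s by (simp_all add: DERIV_deriv_iff_real_differentiable)
  have "acc \<beta> s \<bullet> T s = 0" "acc \<beta> s \<bullet> N s = 0"
    using osc s by (auto intro: span_base simp: orthogonal_def)
  then have "deriv x1 s = \<kappa> s * x2 s" "deriv x2 s = - \<kappa> s * x1 s"
    unfolding acc_beta_expansion[OF s x1' x2'] using frame_orthonormal[OF s]
    by (auto simp: inner_add_left inner_commute algebra_simps)
  then show "(x1 has_real_derivative \<kappa> s * x2 s) (at s)" "(x2 has_real_derivative - \<kappa> s * x1 s) (at s)"
    using x1' x2' by simp_all
qed

lemma acc_beta: "s \<in> I \<Longrightarrow> acc \<beta> s = (\<tau> s * x2 s) *\<^sub>R B s"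
  using acc_beta_expansion[OF _ coefficient_derivatives] by simp

lemma mate_angle_exists:
  "\<exists>\<theta>. (\<forall>s\<in>I. (\<theta> has_real_derivative \<kappa> s) (at s)) \<and> (\<forall>s\<in>I. x1 s = sin (\<theta> s) \<and> x2 s = cos (\<theta> s))"
proof -
  have "continuous_on I x1" "continuous_on I x2"
    using x_smooth by (auto intro!: continuous_at_imp_continuous_on differentiable_imp_continuous_within)
  then obtain \<theta> where cont: "continuous_on I \<theta>" and x: "\<And>s. s \<in> I \<Longrightarrow> x2 s = cos (\<theta> s) \<and> x1 s = sin (\<theta> s)"
    using continuous_angle_lifting[OF interval, of x2 x1] unit by (auto simp: add.commute)
  have "(\<theta> has_real_derivative \<kappa> s) (at s)" if s: "s \<in> I" for s
  proof -
    have "((\<lambda>t. sin (\<theta> t)) has_real_derivative \<kappa> s * cos (\<theta> s)) (at s)"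
      using has_field_derivative_transform_within_open[OF coefficient_derivatives(1)[OF s] open_dom s] x s
      by simp
    moreover have "((\<lambda>t. cos (\<theta> t)) has_real_derivative - \<kappa> s * sin (\<theta> s)) (at s)"
      using has_field_derivative_transform_within_open[OF coefficient_derivatives(2)[OF s] open_dom s] x s
      by simp
    moreover have "isCont \<theta> s"
      using cont open_dom s continuous_on_eq_continuous_at by blast
    ultimately have "(\<theta> has_real_derivative
        \<kappa> s * cos (\<theta> s) * cos (\<theta> s) - - \<kappa> s * sin (\<theta> s) * sin (\<theta> s)) (at s)"
      by (rule angle_has_real_derivative[rotated])
    also have "\<kappa> s * cos (\<theta> s) * cos (\<theta> s) - - \<kappa> s * sin (\<theta> s) * sin (\<theta> s)
        = \<kappa> s * ((sin (\<theta> s))\<^sup>2 + (cos (\<theta> s))\<^sup>2)"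
      by algebra
    finally show ?thesis by (simp only: sin_cos_squared_add mult_1_right)
  qed
  then show ?thesis using x by blast
qed

end

locale frenet_osculating_mate = osculating_mate +
  fixes Tb Nb Bb :: "real \<Rightarrow> real^3" and \<kappa>b \<tau>b :: "real \<Rightarrow> real"
  assumes beta: "frenet_apparatus I \<beta> Tb Nb Bb \<kappa>b \<tau>b"
begin

lemma mate_tangent: "s \<in> I \<Longrightarrow> Tb s = x1 s *\<^sub>R T s + x2 s *\<^sub>R N s"
  using frenet_apparatusD(1)[OF beta] vel_beta by simp

lemma mate_curvature: "s \<in> I \<Longrightarrow> \<kappa>b s = \<bar>\<tau> s * x2 s\<bar>"
  using frenet_apparatusD(4)[OF beta] acc_beta frame_orthonormal(3) by (simp add: norm_eq_1)

lemma mate_curvature_nonzero: "s \<in> I \<Longrightarrow> \<tau> s * x2 s \<noteq> 0"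
  using frenet_apparatusD(5)[OF beta] mate_curvature by fastforce

lemma mate_normal: "s \<in> I \<Longrightarrow> Nb s = sgn (\<tau> s * x2 s) *\<^sub>R B s"
  using frenet_apparatusD(6)[OF beta] mate_curvature acc_beta by (simp add: real_sgn_eq)

lemma mate_binormal: "s \<in> I \<Longrightarrow> Bb s = sgn (\<tau> s * x2 s) *\<^sub>R (x2 s *\<^sub>R T s - x1 s *\<^sub>R N s)"
  using frenet_apparatusD(7)[OF beta] mate_tangent mate_normal frame_cross
  by (simp add: cross_add_left cross_mult_left cross_mult_right algebra_simps)

lemma mate_torsion:
  assumes s: "s \<in> I"
  shows "\<tau>b s = \<tau> s * x1 s"
proof -
  define e where "e = sgn (\<tau> s * x2 s)"
  define Nb' where "Nb' = - \<kappa>b s *\<^sub>R Tb s + \<tau>b s *\<^sub>R Bb s"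
  have Nb': "(Nb has_vector_derivative Nb') (at s)"
    unfolding Nb'_def using frenet_apparatusD(8)[OF beta s] .
  have Nb_T: "Nb t \<bullet> T t = 0" and Nb_N: "Nb t \<bullet> N t = 0" and Nb_B: "Nb s \<bullet> B s = e"
    if "t \<in> I" for t
    using frame_orthonormal[OF that] frame_orthonormal[OF s] mate_normal[OF that] mate_normal[OF s]
    by (simp_all add: e_def inner_commute)
  \<comment> \<open>Differentiating \<open>Nb \<bullet> T = 0\<close> and \<open>Nb \<bullet> N = 0\<close> avoids showing that the sign in
    \<open>Nb = \<plusminus>B\<close> is locally constant.\<close>
  have "Nb' \<bullet> T s + Nb s \<bullet> (\<kappa> s *\<^sub>R N s) = 0"
    using Nb_T by (intro inner_constant_on_derivative[OF open_dom s _ Nb'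
          frenet_tangent_derivative[OF alpha open_dom s]])
  then have Nb'_T: "Nb' \<bullet> T s = 0"
    using Nb_N[OF s] by simp
  have "Nb' \<bullet> N s + Nb s \<bullet> (- \<kappa> s *\<^sub>R T s + \<tau> s *\<^sub>R B s) = 0"
    using Nb_N by (intro inner_constant_on_derivative[OF open_dom s _ Nb'
          frenet_apparatusD(8)[OF alpha s]])
  then have Nb'_N: "Nb' \<bullet> N s = - e * \<tau> s"
    using Nb_T[OF s] Nb_B[OF s] by (simp add: inner_diff_right algebra_simps)
  have "\<tau>b s = Nb' \<bullet> Bb s"
    using frenet_frame_orthonormal[OF beta open_dom s] by (simp add: Nb'_def inner_diff_left)
  also have "\<dots> = e * e * \<tau> s * x1 s"
    using mate_binormal[OF s] Nb'_T Nb'_N by (simp add: e_def inner_diff_right)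
  finally show ?thesis
    using mate_curvature_nonzero[OF s] by (simp add: e_def sgn_if split: if_splits)
qed

end

theorem theorem3:
  fixes I :: "real set" and \<alpha> \<beta> T N B Tb Nb Bb :: "real \<Rightarrow> real^3"
    and \<kappa> \<tau> \<kappa>b \<tau>b x1 x2 :: "real \<Rightarrow> real"
  assumes I: "is_interval I" "open I"
    and alpha: "frenet_apparatus I \<alpha> T N B \<kappa> \<tau>"
    and beta_vel: "\<forall>s\<in>I. (\<beta> has_vector_derivative (x1 s *\<^sub>R T s + x2 s *\<^sub>R N s)) (at s)"
    and x_smooth: "\<forall>s\<in>I. x1 differentiable (at s) \<and> x2 differentiable (at s)"
    and unit: "\<forall>s\<in>I. (x1 s)\<^sup>2 + (x2 s)\<^sup>2 = 1"
    and osc: "\<forall>s\<in>I. \<forall>w\<in>span {T s, N s}. orthogonal (acc \<beta> s) w"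
    and beta: "frenet_apparatus I \<beta> Tb Nb Bb \<kappa>b \<tau>b"
  shows "\<exists>\<theta>::real \<Rightarrow> real. (\<forall>s\<in>I. (\<theta> has_real_derivative \<kappa> s) (at s)) \<and>
    (\<forall>s\<in>I. x1 s = sin (\<theta> s) \<and> x2 s = cos (\<theta> s) \<and>
       Tb s = sin (\<theta> s) *\<^sub>R T s + cos (\<theta> s) *\<^sub>R N s \<and>
       (\<exists>\<epsilon>::real. (\<epsilon> = 1 \<or> \<epsilon> = -1) \<and>
          Nb s = \<epsilon> *\<^sub>R B s \<and>
          Bb s = \<epsilon> *\<^sub>R (cos (\<theta> s) *\<^sub>R T s - sin (\<theta> s) *\<^sub>R N s) \<and>
          \<kappa>b s = \<epsilon> * \<tau> s * cos (\<theta> s) \<and>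
          \<tau>b s = \<tau> s * sin (\<theta> s)))"
proof -
  interpret frenet_osculating_mate I \<alpha> \<beta> T N B \<kappa> \<tau> x1 x2 Tb Nb Bb \<kappa>b \<tau>b
    using assms by unfold_locales
  obtain \<theta> where \<theta>': "\<forall>s\<in>I. (\<theta> has_real_derivative \<kappa> s) (at s)"
    and x: "\<And>s. s \<in> I \<Longrightarrow> x1 s = sin (\<theta> s) \<and> x2 s = cos (\<theta> s)"
    using mate_angle_exists by blast
  show ?thesis
  proof (intro exI[of _ \<theta>] conjI \<theta>' ballI)
    fix s assume s: "s \<in> I"
    let ?\<epsilon> = "sgn (\<tau> s * cos (\<theta> s))"
    have "?\<epsilon> = 1 \<or> ?\<epsilon> = -1"
      using mate_curvature_nonzero[OF s] x[OF s] by (simp add: sgn_if)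
    moreover have "\<kappa>b s = ?\<epsilon> * \<tau> s * cos (\<theta> s)"
      using mate_curvature[OF s] x[OF s] by (simp add: abs_sgn ac_simps)
    ultimately show "x1 s = sin (\<theta> s)" "x2 s = cos (\<theta> s)"
      "Tb s = sin (\<theta> s) *\<^sub>R T s + cos (\<theta> s) *\<^sub>R N s"
      "\<exists>\<epsilon>::real. (\<epsilon> = 1 \<or> \<epsilon> = -1) \<and>
          Nb s = \<epsilon> *\<^sub>R B s \<and>
          Bb s = \<epsilon> *\<^sub>R (cos (\<theta> s) *\<^sub>R T s - sin (\<theta> s) *\<^sub>R N s) \<and>
          \<kappa>b s = \<epsilon> * \<tau> s * cos (\<theta> s) \<and>
          \<tau>b s = \<tau> s * sin (\<theta> s)"
      using x[OF s] mate_tangent[OF s] mate_normal[OF s] mate_binormal[OF s] mate_torsion[OF s]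
      by auto
  qed
qed

end
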